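(* A PAF $\psi:\mathcal{P}^N\to\mathcal{P}$ is Level-SP if and only if there exist, for every coalition $S\subseteq N$, a weakly increasing, right-continuous function $f_S:\Lambda\to[0,1]$ such that: (1) for all $S\subseteq S'\subseteq N$ and all $a\in\Lambda$, $f_S(a)\le f_{S'}(a)$; (2) if $\sup\Lambda\notin\Lambda$ then $\lim_{a\to\sup\Lambda}f_N(a)=1$, and otherwise $f_N(\sup\Lambda)=1$; (3) if $\inf\Lambda\notin\Lambda$ then $\lim_{a\to\inf\Lambda}f_\emptyset(a)=0$; (4) the CAF $\Psi$ associated with $\psi$ satisfies, for all $\mathbf P\in\mathcal C^N$ and all $a\in\Lambda$, $$\Psi(\mathbf P)(a)=\max_{S\subseteq N}\min\Big(f_S(a),\min_{i\in S}P_i(a)\Big)$$ (with the convention that the minimum over the empty set equals $1$). Moreover, $\psi$ is unanimous if and only if such functions can be chosen with $f_\emptyset(a)=0$ and $f_N(a)=1$ for all $a\in\Lambda$.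
   Context: Let $N=\{1,\dots,n\}$ be a finite set of experts and $\Lambda\subseteq\mathbb R$ a nonempty Borel set with the usual order. $\mathcal P$ denotes the set of Borel probability measures on $\Lambda$ and $\mathcal C$ the set of cumulative distribution functions (CDFs) on $\Lambda$; the map $\pi:\mathcal P\to\mathcal C$ is $\pi(p)(a)=p(\{x\in\Lambda:x\le a\})$. A probability aggregation function (PAF) is a map $\psi:\mathcal P^N\to\mathcal P$; its associated cumulative aggregation function (CAF) $\Psi:\mathcal C^N\to\mathcal C$ is defined by $\Psi(\pi(p_1),\dots,\pi(p_n))=\pi(\psi(p_1,\dots,p_n))$. We write $P_i=\pi(p_i)$ and $\mathbf P=(P_1,\dots,P_n)$. For a profile $\mathbf z$, $\mathbf z_{-i}(z_i')$ denotes the profile obtained from $\mathbf z$ by replacing its $i$-th coordinate by $z_i'$. The PAF $\psi$ is level-strategyproof (Level-SP) if for every $i\in N$, every $\mathbf P\in\mathcal C^N$, every $P_i'\in\mathcal C$ and every $a\in\Lambda$: if $P_i(a)<\Psi(\mathbf P)(a)$ then $\Psi(\mathbf P)(a)\le\Psi(\mathbf P_{-i}(P_i'))(a)$, and if $P_i(a)>\Psi(\mathbf P)(a)$ then $\Psi(\mathbf P)(a)\ge\Psi(\mathbf P_{-i}(P_i'))(a)$. $\psi$ is unanimous if $\psi(p,\dots,p)=p$ for all $p\in\mathcal P$. *)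

theory Defs
  imports "HOL-Probability.Probability"
begin

definition probs :: "real set \<Rightarrow> real measure set" where
  "probs L = {M. sets M = sets (restrict_space borel L) \<and> prob_space M}"

definition cdfL :: "real set \<Rightarrow> real measure \<Rightarrow> real \<Rightarrow> real" where
  "cdfL L M a = measure M {x \<in> L. x \<le> a}"

definition profiles :: "real set \<Rightarrow> ('n \<Rightarrow> real measure) set" where
  "profiles L = {p. \<forall>i. p i \<in> probs L}"

definition is_PAF :: "real set \<Rightarrow> (('n \<Rightarrow> real measure) \<Rightarrow> real measure) \<Rightarrow> bool" where
  "is_PAF L psi \<longleftrightarrow> (\<forall>p \<in> profiles L. psi p \<in> probs L)"

text \<open>Level strategy-proofness, stated via the CAF Psi(pi p) = pi(psi p).\<close>
definition level_SP :: "real set \<Rightarrow> (('n \<Rightarrow> real measure) \<Rightarrow> real measure) \<Rightarrow> bool" where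
  "level_SP L psi \<longleftrightarrow>
     (\<forall>i. \<forall>p \<in> profiles L. \<forall>q \<in> probs L. \<forall>a \<in> L.
        (cdfL L (p i) a < cdfL L (psi p) a \<longrightarrow> cdfL L (psi p) a \<le> cdfL L (psi (p(i := q))) a) \<and>
        (cdfL L (p i) a > cdfL L (psi p) a \<longrightarrow> cdfL L (psi p) a \<ge> cdfL L (psi (p(i := q))) a))"

definition unanimous :: "real set \<Rightarrow> (('n \<Rightarrow> real measure) \<Rightarrow> real measure) \<Rightarrow> bool" where
  "unanimous L psi \<longleftrightarrow> (\<forall>p \<in> probs L. psi (\<lambda>_. p) = p)"

definition min_coal :: "real set \<Rightarrow> ('n \<Rightarrow> real measure) \<Rightarrow> 'n set \<Rightarrow> real \<Rightarrow> real" where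
  "min_coal L p S a = (if S = {} then 1 else Min ((\<lambda>i. cdfL L (p i) a) ` S))"

definition to_sup :: "real set \<Rightarrow> real filter" where
  "to_sup L = (if bdd_above L then at (Sup L) within L else inf at_top (principal L))"

definition to_inf :: "real set \<Rightarrow> real filter" where
  "to_inf L = (if bdd_below L then at (Inf L) within L else inf at_bot (principal L))"

definition sup_in :: "real set \<Rightarrow> bool" where
  "sup_in L \<longleftrightarrow> bdd_above L \<and> Sup L \<in> L"

definition inf_in :: "real set \<Rightarrow> bool" where
  "inf_in L \<longleftrightarrow> bdd_below L \<and> Inf L \<in> L"

text \<open>Conditions on the family f_S (S ranges over all coalitions, i.e. subsets of the expert type).\<close>
definition admissible_family :: "real set \<Rightarrow> ('n set \<Rightarrow> real \<Rightarrow> real) \<Rightarrow> bool" where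
  "admissible_family L f \<longleftrightarrow>
     (\<forall>S. mono_on L (f S)
        \<and> (\<forall>a \<in> L. (f S \<longlongrightarrow> f S a) (at a within (L \<inter> {a<..})))
        \<and> (\<forall>a \<in> L. 0 \<le> f S a \<and> f S a \<le> 1))
   \<and> (\<forall>S S'. S \<subseteq> S' \<longrightarrow> (\<forall>a \<in> L. f S a \<le> f S' a))
   \<and> (if sup_in L then f UNIV (Sup L) = 1 else (f UNIV \<longlongrightarrow> 1) (to_sup L))
   \<and> (\<not> inf_in L \<longrightarrow> (f {} \<longlongrightarrow> 0) (to_inf L))"

definition represents :: "real set \<Rightarrow> (('n::finite \<Rightarrow> real measure) \<Rightarrow> real measure)
    \<Rightarrow> ('n set \<Rightarrow> real \<Rightarrow> real) \<Rightarrow> bool" where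
  "represents L psi f \<longleftrightarrow>
     (\<forall>p \<in> profiles L. \<forall>a \<in> L.
        cdfL L (psi p) a = Max ((\<lambda>S. min (f S a) (min_coal L p S a)) ` UNIV))"

end

theory Submission
  imports Defs
begin

text \<open>
  Level-SP says that, at every level \<open>a\<close>, the aggregate value \<open>\<Psi>(P)(a)\<close> is an uncompromising
  function of each single report \<open>P\<^sub>i(a)\<close>: moving one's report cannot pull the outcome towards it.
  An uncompromising function of a report in \<open>[0, 1]\<close> is monotone and equals the median of the
  report and its values at the extreme reports \<open>0\<close> and \<open>1\<close>. Let \<open>f\<^sub>S(a)\<close> be the aggregate value at
  \<open>a\<close> when the experts in \<open>S\<close> put all mass at \<open>a\<close> and the others above \<open>a\<close>. Replacing the reports
  one at a time by these extreme ones, the median formula turns \<open>\<Psi>(P)(a)\<close> into the lattice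
  polynomial \<open>max\<^sub>S min (f\<^sub>S(a), min\<^sub>i\<^sub>\<in>\<^sub>S P\<^sub>i(a))\<close>. Monotonicity, right-continuity and the limits
  of \<open>f\<^sub>S\<close> are inherited from the CDF of the aggregate of a suitable fixed profile.

  Conversely the lattice polynomial is itself uncompromising in each coordinate, and it maps
  constant vectors to their value when \<open>f\<^sub>\<emptyset> = 0\<close> and \<open>f\<^sub>N = 1\<close>; since a measure on \<open>L\<close> is determined
  by its CDF on \<open>L\<close>, the latter gives unanimity.
\<close>

abbreviation law :: "real measure \<Rightarrow> real measure" where
  "law M \<equiv> distr M borel (\<lambda>x. x)"

lemma sets_probs: "M \<in> probs L \<Longrightarrow> sets M = sets (restrict_space borel L)"
  by (simp add: probs_def)

lemma space_probs: "M \<in> probs L \<Longrightarrow> space M = L"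
  using sets_eq_imp_space_eq[OF sets_probs] by (simp add: space_restrict_space)

lemma prob_space_probs: "M \<in> probs L \<Longrightarrow> prob_space M"
  by (simp add: probs_def)

lemma measurable_id_probs: "M \<in> probs L \<Longrightarrow> (\<lambda>x. x) \<in> borel_measurable M"
  using measurable_cong_sets[OF sets_probs refl] measurable_restrict_space1[OF measurable_ident_sets[OF refl]]
  by blast

lemma real_distribution_law: "M \<in> probs L \<Longrightarrow> real_distribution (law M)"
  using prob_space.real_distribution_distr[OF prob_space_probs measurable_id_probs] by blast

lemma finite_borel_measure_law: "M \<in> probs L \<Longrightarrow> finite_borel_measure (law M)"
  by (rule real_distribution.finite_borel_measure_M[OF real_distribution_law])

lemma emeasure_law: "M \<in> probs L \<Longrightarrow> A \<in> sets borel \<Longrightarrow> emeasure (law M) A = emeasure M (A \<inter> L)"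
  by (simp add: emeasure_distr measurable_id_probs space_probs)

lemma measure_law: "M \<in> probs L \<Longrightarrow> A \<in> sets borel \<Longrightarrow> measure (law M) A = measure M (A \<inter> L)"
  by (simp add: measure_def emeasure_law)

lemma cdfL_eq_cdf_law: assumes "M \<in> probs L" shows "cdfL L M = cdf (law M)"
proof
  fix x
  have "{..x} \<inter> L = {y\<in>L. y \<le> x}" by auto
  then show "cdfL L M x = cdf (law M) x"
    using assms by (simp add: cdf_def cdfL_def measure_law)
qed

lemma cdfL_mono: "M \<in> probs L \<Longrightarrow> x \<le> y \<Longrightarrow> cdfL L M x \<le> cdfL L M y"
  by (simp add: cdfL_eq_cdf_law finite_borel_measure.cdf_nondecreasing[OF finite_borel_measure_law])

lemma cdfL_nonneg: "0 \<le> cdfL L M x"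
  by (simp add: cdfL_def)

lemma cdfL_le_1: "M \<in> probs L \<Longrightarrow> cdfL L M x \<le> 1"
  by (simp add: cdfL_eq_cdf_law real_distribution.cdf_bounded_prob[OF real_distribution_law])

lemma cdfL_eq_1: assumes "M \<in> probs L" "\<forall>b\<in>L. b \<le> x" shows "cdfL L M x = 1"
proof -
  have "{y\<in>L. y \<le> x} = space M" using assms space_probs[OF assms(1)] by auto
  then show ?thesis using prob_space.prob_space[OF prob_space_probs[OF assms(1)]] by (simp add: cdfL_def)
qed

lemma cdfL_right_cont: "M \<in> probs L \<Longrightarrow> (cdfL L M \<longlongrightarrow> cdfL L M a) (at_right a)"
  using finite_borel_measure.cdf_is_right_cont[OF finite_borel_measure_law]
  by (simp add: cdfL_eq_cdf_law continuous_within)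

lemma cdfL_left_cont_notin:
  assumes M: "M \<in> probs L" and s: "s \<notin> L"
  shows "(cdfL L M \<longlongrightarrow> cdfL L M s) (at_left s)"
proof -
  have "{..<s} \<inter> L = {y \<in> L. y \<le> s}" using s by (auto simp: order.order_iff_strict)
  then have "measure (law M) {..<s} = cdfL L M s" by (simp add: measure_law[OF M] cdfL_def)
  then show ?thesis
    using finite_borel_measure.cdf_at_left[OF finite_borel_measure_law[OF M]] cdfL_eq_cdf_law[OF M]
    by metis
qed

text \<open>Values of a CDF outside \<open>L\<close> are limits of values on \<open>L\<close>.\<close>
lemma cdfL_eqI:
  assumes M: "M \<in> probs L" and N: "N \<in> probs L"
    and eq: "\<forall>a\<in>L. cdfL L M a = cdfL L N a"
  shows "cdfL L M x = cdfL L N x"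
proof -
  define A where "A = {y\<in>L. y \<le> x}"
  show ?thesis
  proof (cases "A = {}")
    case True
    then show ?thesis unfolding cdfL_def A_def by (metis measure_empty)
  next
    case False
    have bA: "bdd_above A" unfolding A_def by (rule bdd_aboveI[of _ x]) auto
    define s where "s = Sup A"
    have "s \<le> x" unfolding s_def using False by (rule cSup_least) (auto simp: A_def)
    then have "{y\<in>L. y \<le> x} = {y\<in>L. y \<le> s}"
      using cSup_upper[OF _ bA] by (auto simp: A_def s_def)
    then have cdfL_x: "cdfL L K x = cdfL L K s" for K by (simp add: cdfL_def)
    show ?thesis
    proof (cases "s \<in> L")
      case True
      then show ?thesis using eq cdfL_x by simp
    next
      case sL: False
      have A_less: "A \<subseteq> {..<s}"
        using cSup_upper[OF _ bA] sL by (force simp: s_def A_def order.order_iff_strict)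
      have lim: "(cdfL L K \<longlongrightarrow> cdfL L K s) (at s within A)" if "K \<in> probs L" for K
        using tendsto_within_subset[OF cdfL_left_cont_notin[OF that sL] A_less] .
      have "A - {s} = A" using A_less by auto
      then have "s \<in> closure (A - {s})"
        using closure_contains_Sup[OF False bA] by (simp add: s_def)
      then have nontriv: "\<not> trivial_limit (at s within A)"
        using not_trivial_limit_within by blast
      have "eventually (\<lambda>y. cdfL L N y = cdfL L M y) (at s within A)"
        using eq by (auto simp: eventually_at_filter A_def)
      then have "(cdfL L M \<longlongrightarrow> cdfL L N s) (at s within A)"
        using tendsto_cong lim[OF N] by fastforce
      then show ?thesis using tendsto_unique[OF nontriv lim[OF M]] cdfL_x by simp
    qed
  qed
qed

lemma probs_eqI:
  assumes L: "L \<in> sets borel" and M: "M \<in> probs L" and N: "N \<in> probs L"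
    and eq: "\<forall>a\<in>L. cdfL L M a = cdfL L N a"
  shows "M = N"
proof (rule measure_eqI)
  show sets_eq: "sets M = sets N" using sets_probs[OF M] sets_probs[OF N] by simp
  have "cdf (law M) = cdf (law N)"
    using cdfL_eqI[OF M N eq] cdfL_eq_cdf_law[OF M] cdfL_eq_cdf_law[OF N] by auto
  then have law_eq: "law M = law N" using cdf_unique real_distribution_law M N by blast
  fix A assume "A \<in> sets M"
  then have "A \<subseteq> L" "A \<in> sets borel"
    using sets_probs[OF M] L by (auto simp: sets_restrict_space_iff)
  then show "emeasure M A = emeasure N A"
    using law_eq emeasure_law[OF M] emeasure_law[OF N] by (metis Int_absorb2)
qed

lemma eventually_to_sup_ge:
  assumes "\<not> sup_in L" and a: "a \<in> L"
  shows "eventually (\<lambda>x. x \<in> L \<and> a \<le> x) (to_sup L)"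
proof (cases "bdd_above L")
  case True
  have "a < Sup L"
    using cSup_upper[OF a True] assms True by (force simp: sup_in_def order.order_iff_strict)
  then have "eventually (\<lambda>x. x \<in> L \<and> a \<le> x) (at (Sup L) within L)"
    unfolding eventually_at by (intro exI[of _ "Sup L - a"]) (auto simp: dist_real_def)
  then show ?thesis using True by (simp add: to_sup_def)
next
  case False
  have "eventually (\<lambda>x. x \<in> L \<longrightarrow> x \<in> L \<and> a \<le> x) at_top"
    using eventually_ge_at_top[of a] by eventually_elim auto
  then show ?thesis using False by (simp add: to_sup_def eventually_inf_principal)
qed

lemma eventually_to_inf_less:
  assumes "\<not> inf_in L" and b: "b \<in> L"
  shows "eventually (\<lambda>x. x \<in> L \<and> x < b) (to_inf L)"
proof (cases "bdd_below L")
  case True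
  have "Inf L < b"
    using cInf_lower[OF b True] assms True by (force simp: inf_in_def order.order_iff_strict)
  then have "eventually (\<lambda>x. x \<in> L \<and> x < b) (at (Inf L) within L)"
    unfolding eventually_at by (intro exI[of _ "b - Inf L"]) (auto simp: dist_real_def)
  then show ?thesis using True by (simp add: to_inf_def)
next
  case False
  have "eventually (\<lambda>x. x \<in> L \<longrightarrow> x \<in> L \<and> x < b) at_bot"
    using eventually_le_at_bot[of "b - 1"] by eventually_elim auto
  then show ?thesis using False by (simp add: to_inf_def eventually_inf_principal)
qed

lemma cdfL_tendsto_to_sup:
  assumes M: "M \<in> probs L" and "\<not> sup_in L"
  shows "(cdfL L M \<longlongrightarrow> 1) (to_sup L)"
proof (cases "bdd_above L")
  case True
  have sL: "Sup L \<notin> L" using assms True by (simp add: sup_in_def)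
  have "L \<subseteq> {..<Sup L}" using cSup_upper[OF _ True] sL by (force simp: order.order_iff_strict)
  moreover have "cdfL L M (Sup L) = 1" using cdfL_eq_1[OF M] cSup_upper[OF _ True] by blast
  ultimately have "(cdfL L M \<longlongrightarrow> 1) (at (Sup L) within L)"
    using tendsto_within_subset[OF cdfL_left_cont_notin[OF M sL]] by metis
  then show ?thesis using True by (simp add: to_sup_def)
next
  case False
  have "(cdfL L M \<longlongrightarrow> 1) at_top"
    using real_distribution.cdf_lim_at_top_prob[OF real_distribution_law[OF M]]
    by (simp add: cdfL_eq_cdf_law[OF M])
  then show ?thesis using False tendsto_mono inf_le1 by (metis to_sup_def)
qed

lemma cdfL_tendsto_to_inf:
  assumes M: "M \<in> probs L" and "\<not> inf_in L"
  shows "(cdfL L M \<longlongrightarrow> 0) (to_inf L)"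
proof (cases "bdd_below L")
  case True
  have sL: "Inf L \<notin> L" using assms True by (simp add: inf_in_def)
  have L_greater: "L \<subseteq> {Inf L<..}" using cInf_lower[OF _ True] sL by (force simp: order.order_iff_strict)
  then have "{y\<in>L. y \<le> Inf L} = {}" by auto
  then have "cdfL L M (Inf L) = 0" unfolding cdfL_def by (metis measure_empty)
  then have "(cdfL L M \<longlongrightarrow> 0) (at (Inf L) within L)"
    using tendsto_within_subset[OF cdfL_right_cont[OF M] L_greater] by simp
  then show ?thesis using True by (simp add: to_inf_def)
next
  case False
  have "(cdfL L M \<longlongrightarrow> 0) at_bot"
    using finite_borel_measure.cdf_lim_at_bot[OF finite_borel_measure_law[OF M]]
    by (simp add: cdfL_eq_cdf_law[OF M])
  then show ?thesis using False tendsto_mono inf_le1 by (metis to_inf_def)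
qed

definition point_mass :: "real set \<Rightarrow> real \<Rightarrow> real measure" where
  "point_mass L x = return (restrict_space borel L) x"

lemma point_mass_probs: "x \<in> L \<Longrightarrow> point_mass L x \<in> probs L"
  unfolding probs_def point_mass_def by (auto intro!: prob_space_return simp: space_restrict_space)

lemma cdfL_point_mass: assumes "x \<in> L" shows "cdfL L (point_mass L x) a = (if x \<le> a then 1 else 0)"
proof -
  have "{y\<in>L. y \<le> a} = L \<inter> {..a}" by auto
  then have "{y\<in>L. y \<le> a} \<in> sets (restrict_space borel L)"
    by (simp add: sets_restrict_space)
  then show ?thesis using assms by (simp add: cdfL_def point_mass_def measure_return)
qed

definition min_over :: "('n::finite \<Rightarrow> real) \<Rightarrow> 'n set \<Rightarrow> real" where
  "min_over t S = (if S = {} then 1 else Min (t ` S))"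

definition maxmin :: "('n::finite set \<Rightarrow> real) \<Rightarrow> ('n \<Rightarrow> real) \<Rightarrow> real" where
  "maxmin g t = Max ((\<lambda>S. min (g S) (min_over t S)) ` UNIV)"

lemma min_over_le: "i \<in> S \<Longrightarrow> min_over t S \<le> t i"
  unfolding min_over_def by auto

lemma min_over_attained: "S \<noteq> {} \<Longrightarrow> \<exists>j\<in>S. min_over t S = t j"
proof -
  assume "S \<noteq> {}"
  then have "Min (t ` S) \<in> t ` S" by (intro Min_in) auto
  then obtain j where "j \<in> S" "Min (t ` S) = t j" by blast
  then show ?thesis using \<open>S \<noteq> {}\<close> unfolding min_over_def by auto
qed

lemma min_over_upd_notin: "i \<notin> S \<Longrightarrow> min_over (t(i := s)) S = min_over t S"
  unfolding min_over_def by (auto intro!: arg_cong[where f = Min] image_cong)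

lemma min_over_const: "min_over (\<lambda>_. v) S = (if S = {} then 1 else v)"
  by (simp add: min_over_def image_constant_conv)

lemma maxmin_ge: "min (g S) (min_over t S) \<le> maxmin g t"
  unfolding maxmin_def by (rule Max_ge) auto

lemma maxmin_leI: "(\<And>S. min (g S) (min_over t S) \<le> c) \<Longrightarrow> maxmin g t \<le> c"
  unfolding maxmin_def by (subst Max_le_iff) auto

lemma maxmin_attained: "\<exists>S. maxmin g t = min (g S) (min_over t S)"
proof -
  have "maxmin g t \<in> (\<lambda>S. min (g S) (min_over t S)) ` UNIV"
    unfolding maxmin_def by (rule Max_in) auto
  then show ?thesis by auto
qed

lemma maxmin_upd_ge:
  assumes "t i < maxmin g t"
  shows "maxmin g t \<le> maxmin g (t(i := s))"
proof -
  obtain S where S: "maxmin g t = min (g S) (min_over t S)"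
    using maxmin_attained by blast
  then have "i \<notin> S" using assms min_over_le[of i S t] by fastforce
  then show ?thesis using S maxmin_ge min_over_upd_notin by metis
qed

lemma maxmin_upd_le:
  assumes gt: "maxmin g t < t i"
  shows "maxmin g (t(i := s)) \<le> maxmin g t"
proof (rule maxmin_leI)
  fix S
  have below: "min (g S) (min_over t S) \<le> maxmin g t" by (rule maxmin_ge)
  show "min (g S) (min_over (t(i := s)) S) \<le> maxmin g t"
  proof (cases "S = {}")
    case True
    then show ?thesis using below by (simp add: min_over_def)
  next
    case False
    then obtain j where j: "j \<in> S" "min_over t S = t j" using min_over_attained by blast
    show ?thesis
    proof (cases "j = i")
      case True
      then have "g S \<le> maxmin g t" using below gt j by (auto simp: min_def split: if_splits)
      then show ?thesis by (simp add: min.coboundedI1)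
    next
      case False
      then have "min_over (t(i := s)) S \<le> min_over t S"
        using min_over_le[OF j(1), of "t(i := s)"] j by simp
      then show ?thesis using below by linarith
    qed
  qed
qed

text \<open>
  Uncompromisingness in the sense of Border and Jordan: \<open>c x\<close> is the value reported by one agent
  and \<open>w x\<close> the resulting outcome; no change of report moves the outcome towards \<open>c x\<close>.\<close>
definition uncompromising :: "'a set \<Rightarrow> ('a \<Rightarrow> real) \<Rightarrow> ('a \<Rightarrow> real) \<Rightarrow> bool" where
  "uncompromising X c w \<longleftrightarrow>
     (\<forall>x\<in>X. \<forall>y\<in>X. (c x < w x \<longrightarrow> w x \<le> w y) \<and> (w x < c x \<longrightarrow> w y \<le> w x))"

lemma uncompromising_maxmin: "uncompromising X id (\<lambda>s. maxmin g (t(i := s)))"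
  unfolding uncompromising_def
  using maxmin_upd_ge[of "t(i := _)" i g] maxmin_upd_le[of g "t(i := _)" i] by simp

lemma uncompromising_mono:
  assumes unc: "uncompromising X c w" and x: "x \<in> X" and y: "y \<in> X" and le: "c x \<le> c y"
  shows "w x \<le> w y"
proof (rule ccontr)
  assume "\<not> w x \<le> w y"
  then have lt: "w y < w x" by simp
  then have "\<not> c x < w x" using unc x y unfolding uncompromising_def by force
  then have "w y < c y" using lt le by linarith
  then show False using unc x y lt unfolding uncompromising_def by force
qed

lemma uncompromising_median:
  assumes unc: "uncompromising X c w"
    and x0: "x0 \<in> X" "c x0 = 0" and x1: "x1 \<in> X" "c x1 = 1"
    and range: "\<forall>x\<in>X. 0 \<le> c x \<and> c x \<le> 1" and x: "x \<in> X"
  shows "w x = max (w x0) (min (c x) (w x1))"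
proof -
  have lower: "w x0 \<le> w x" using uncompromising_mono[OF unc x0(1) x] x0 range x by auto
  have upper: "w x \<le> w x1" using uncompromising_mono[OF unc x x1(1)] x1 range x by auto
  consider "c x < w x" | "w x < c x" | "c x = w x" by linarith
  then show ?thesis
  proof cases
    case 1
    then have "w x \<le> w x0" using unc x x0 unfolding uncompromising_def by blast
    then show ?thesis using lower 1 by linarith
  next
    case 2
    then have "w x1 \<le> w x" using unc x x1 unfolding uncompromising_def by blast
    then show ?thesis using lower upper 2 by linarith
  next
    case 3
    then show ?thesis using lower upper by linarith
  qed
qed

lemma maxmin_median:
  assumes "0 \<le> t i" "t i \<le> 1"
  shows "maxmin g t = max (maxmin g (t(i := 0))) (min (t i) (maxmin g (t(i := 1))))"
proof -
  have "maxmin g (t(i := t i)) = max (maxmin g (t(i := 0))) (min (id (t i)) (maxmin g (t(i := 1))))"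
    by (rule uncompromising_median[OF uncompromising_maxmin, where X = "{0..1}"]) (use assms in auto)
  then show ?thesis by simp
qed

lemma maxmin_indicator:
  assumes mono: "\<And>S S'. S \<subseteq> S' \<Longrightarrow> g S \<le> g S'" and range: "\<And>S. 0 \<le> g S \<and> g S \<le> 1"
  shows "maxmin g (\<lambda>j. if j \<in> S then 1 else 0) = g S"
proof (rule antisym)
  show "maxmin g (\<lambda>j. if j \<in> S then 1 else 0) \<le> g S"
  proof (rule maxmin_leI)
    fix S'
    show "min (g S') (min_over (\<lambda>j. if j \<in> S then 1 else 0) S') \<le> g S"
    proof (cases "S' \<subseteq> S")
      case True
      then show ?thesis using mono[OF True] by linarith
    next
      case False
      then obtain j where "j \<in> S'" "j \<notin> S" by auto
      then have "min_over (\<lambda>j. if j \<in> S then 1 else 0) S' \<le> 0"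
        using min_over_le[of j S' "\<lambda>j. if j \<in> S then 1 else 0"] by simp
      then show ?thesis using range[of S] by linarith
    qed
  qed
  have "min_over (\<lambda>j. if j \<in> S then 1 else 0) S = 1"
    by (auto simp: min_over_def image_constant_conv cong: image_cong)
  then show "g S \<le> maxmin g (\<lambda>j. if j \<in> S then 1 else 0)"
    using maxmin_ge[of g S "\<lambda>j. if j \<in> S then 1 else 0"] range[of S] by simp
qed

lemma maxmin_const:
  assumes "g {} \<le> v" "v \<le> g UNIV"
  shows "maxmin g (\<lambda>_. v) = v"
proof (rule antisym)
  show "maxmin g (\<lambda>_. v) \<le> v"
    by (rule maxmin_leI) (use assms in \<open>auto simp: min_over_const\<close>)
  show "v \<le> maxmin g (\<lambda>_. v)"
    using maxmin_ge[of g UNIV "\<lambda>_. v"] assms by (simp add: min_over_const)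
qed

lemma profiles_upd: "P \<in> profiles L \<Longrightarrow> q \<in> probs L \<Longrightarrow> P(i := q) \<in> profiles L"
  by (simp add: profiles_def)

lemma min_coal_eq_min_over: "min_coal L P S a = min_over (\<lambda>i. cdfL L (P i) a) S"
  by (simp add: min_coal_def min_over_def image_image)

lemma represents_maxmin:
  "represents L psi f \<Longrightarrow> P \<in> profiles L \<Longrightarrow> a \<in> L
   \<Longrightarrow> cdfL L (psi P) a = maxmin (\<lambda>S. f S a) (\<lambda>j. cdfL L (P j) a)"
  unfolding represents_def maxmin_def min_coal_eq_min_over by blast

lemma level_SP_if_represents:
  fixes psi :: "('n::finite \<Rightarrow> real measure) \<Rightarrow> real measure"
  assumes "represents L psi f"
  shows "level_SP L psi"
  unfolding level_SP_def
proof (intro allI ballI)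
  fix i and P :: "'n \<Rightarrow> real measure" and q a
  assume P: "P \<in> profiles L" and q: "q \<in> probs L" and a: "a \<in> L"
  define t where "t = (\<lambda>j. cdfL L (P j) a)"
  have "cdfL L (psi P) a = maxmin (\<lambda>S. f S a) t"
    using represents_maxmin[OF assms P a] by (simp add: t_def)
  then have before: "cdfL L (psi P) a = maxmin (\<lambda>S. f S a) (t(i := t i))" by simp
  have "(\<lambda>j. cdfL L ((P(i := q)) j) a) = t(i := cdfL L q a)" by (auto simp: t_def)
  then have after: "cdfL L (psi (P(i := q))) a = maxmin (\<lambda>S. f S a) (t(i := cdfL L q a))"
    using represents_maxmin[OF assms profiles_upd[OF P q] a] by simp
  show "(cdfL L (P i) a < cdfL L (psi P) a \<longrightarrow> cdfL L (psi P) a \<le> cdfL L (psi (P(i := q))) a) \<and>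
      (cdfL L (psi P) a < cdfL L (P i) a \<longrightarrow> cdfL L (psi (P(i := q))) a \<le> cdfL L (psi P) a)"
    using uncompromising_maxmin[of UNIV "\<lambda>S. f S a" t i] before after
    unfolding uncompromising_def by (simp add: t_def)
qed

lemma unanimous_if_represents:
  fixes psi :: "('n::finite \<Rightarrow> real measure) \<Rightarrow> real measure"
  assumes L: "L \<in> sets borel" and PAF: "is_PAF L psi" and rep: "represents L psi f"
    and f01: "\<forall>a\<in>L. f {} a = 0 \<and> f UNIV a = 1"
  shows "unanimous L psi"
  unfolding unanimous_def
proof
  fix p assume p: "p \<in> probs L"
  have P: "(\<lambda>_. p) \<in> profiles L" using p by (simp add: profiles_def)
  have "psi (\<lambda>_. p) \<in> probs L" using PAF P unfolding is_PAF_def by blast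
  moreover have "cdfL L (psi (\<lambda>_. p)) a = cdfL L p a" if a: "a \<in> L" for a
  proof -
    have "cdfL L (psi (\<lambda>_. p)) a = maxmin (\<lambda>S. f S a) (\<lambda>_. cdfL L p a)"
      using represents_maxmin[OF rep P a] by simp
    also have "\<dots> = cdfL L p a"
      by (rule maxmin_const) (use f01 a cdfL_nonneg cdfL_le_1[OF p] in auto)
    finally show ?thesis .
  qed
  ultimately show "psi (\<lambda>_. p) = p" using probs_eqI[OF L _ p] by blast
qed

definition larger :: "real set \<Rightarrow> real \<Rightarrow> real" where
  "larger L a = (SOME b. b \<in> L \<and> a < b)"

lemma larger_mem_greater: "\<exists>b\<in>L. a < b \<Longrightarrow> larger L a \<in> L \<and> a < larger L a"
  unfolding larger_def by (rule someI_ex) auto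

definition level_profile :: "real set \<Rightarrow> 'n set \<Rightarrow> real \<Rightarrow> 'n \<Rightarrow> real measure" where
  "level_profile L S a = (\<lambda>j. if j \<in> S then point_mass L a else point_mass L (larger L a))"

lemma level_profile_profiles: "a \<in> L \<Longrightarrow> \<exists>b\<in>L. a < b \<Longrightarrow> level_profile L S a \<in> profiles L"
  using larger_mem_greater[of L a] by (simp add: profiles_def level_profile_def point_mass_probs)

lemma cdfL_level_profile:
  "a \<in> L \<Longrightarrow> \<exists>b\<in>L. a < b \<Longrightarrow> cdfL L (level_profile L S a j) a = (if j \<in> S then 1 else 0)"
  using larger_mem_greater[of L a] by (simp add: level_profile_def cdfL_point_mass)

text \<open>
  At the maximum of \<open>L\<close> every CDF equals \<open>1\<close>, so no profile separates the
  coalitions there, and the value \<open>c\<close> of the empty coalition may be chosen freely.\<close>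
definition coalition_level ::
    "real set \<Rightarrow> (('n::finite \<Rightarrow> real measure) \<Rightarrow> real measure) \<Rightarrow> real \<Rightarrow> 'n set \<Rightarrow> real \<Rightarrow> real" where
  "coalition_level L psi c S a =
     (if \<exists>b\<in>L. a < b then cdfL L (psi (level_profile L S a)) a else if S = {} then c else 1)"

locale level_SP_PAF =
  fixes L :: "real set" and psi :: "('n::finite \<Rightarrow> real measure) \<Rightarrow> real measure"
  assumes PAF: "is_PAF L psi" and SP: "level_SP L psi"
begin

lemma psi_probs: "P \<in> profiles L \<Longrightarrow> psi P \<in> probs L"
  using PAF by (simp add: is_PAF_def)

lemma uncompromising_psi:
  assumes P: "P \<in> profiles L" and a: "a \<in> L"
  shows "uncompromising (probs L) (\<lambda>q. cdfL L q a) (\<lambda>q. cdfL L (psi (P(i := q))) a)"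
  unfolding uncompromising_def
proof (intro ballI)
  fix x y assume x: "x \<in> probs L" and y: "y \<in> probs L"
  let ?Px = "P(i := x)"
  have "(cdfL L (?Px i) a < cdfL L (psi ?Px) a \<longrightarrow> cdfL L (psi ?Px) a \<le> cdfL L (psi (?Px(i := y))) a) \<and>
      (cdfL L (psi ?Px) a < cdfL L (?Px i) a \<longrightarrow> cdfL L (psi (?Px(i := y))) a \<le> cdfL L (psi ?Px) a)"
    using SP profiles_upd[OF P x] y a unfolding level_SP_def by blast
  then show "(cdfL L x a < cdfL L (psi ?Px) a \<longrightarrow> cdfL L (psi ?Px) a \<le> cdfL L (psi (P(i := y))) a) \<and>
      (cdfL L (psi ?Px) a < cdfL L x a \<longrightarrow> cdfL L (psi (P(i := y))) a \<le> cdfL L (psi ?Px) a)"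
    by simp
qed

lemma cdfL_psi_mono:
  assumes P: "P \<in> profiles L" and Q: "Q \<in> profiles L" and a: "a \<in> L"
    and le: "\<forall>j. cdfL L (P j) a \<le> cdfL L (Q j) a"
  shows "cdfL L (psi P) a \<le> cdfL L (psi Q) a"
proof -
  have "cdfL L (psi P') a \<le> cdfL L (psi Q) a"
    if "finite D" "P' \<in> profiles L" "{j. P' j \<noteq> Q j} \<subseteq> D" "\<forall>j. cdfL L (P' j) a \<le> cdfL L (Q j) a"
    for D P'
    using that
  proof (induction D arbitrary: P' rule: finite_induct)
    case empty
    then have "P' = Q" by auto
    then show ?case by simp
  next
    case (insert i D)
    have Pi: "P' i \<in> probs L" and Qi: "Q i \<in> probs L"
      using insert.prems(1) Q by (simp_all add: profiles_def)
    have "cdfL L (psi P') a = cdfL L (psi (P'(i := P' i))) a" by simp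
    also have "\<dots> \<le> cdfL L (psi (P'(i := Q i))) a"
      by (rule uncompromising_mono[OF uncompromising_psi[OF insert.prems(1) a] Pi Qi])
        (use insert.prems(3) in blast)
    also have "\<dots> \<le> cdfL L (psi Q) a"
    proof (rule insert.IH[OF profiles_upd[OF insert.prems(1) Qi]])
      show "{j. (P'(i := Q i)) j \<noteq> Q j} \<subseteq> D" using insert.prems(2) by auto
      show "\<forall>j. cdfL L ((P'(i := Q i)) j) a \<le> cdfL L (Q j) a" using insert.prems(3) by simp
    qed
    finally show ?case .
  qed
  from this[of UNIV P] show ?thesis using P le by simp
qed

lemma cdfL_psi_cong:
  assumes P: "P \<in> profiles L" and Q: "Q \<in> profiles L" and a: "a \<in> L"
    and eq: "\<forall>j. cdfL L (P j) a = cdfL L (Q j) a"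
  shows "cdfL L (psi P) a = cdfL L (psi Q) a"
  using cdfL_psi_mono[OF P Q a] cdfL_psi_mono[OF Q P a] eq by (simp add: order_antisym)

lemma coalition_level_eq_cdfL_psi:
  assumes a: "a \<in> L" and larger: "\<exists>b\<in>L. a < b" and Q: "Q \<in> profiles L"
    and lev: "\<forall>j. cdfL L (Q j) a = (if j \<in> S then 1 else 0)"
  shows "coalition_level L psi c S a = cdfL L (psi Q) a"
proof -
  have "\<forall>j. cdfL L (level_profile L S a j) a = cdfL L (Q j) a"
    using lev by (simp add: cdfL_level_profile[OF a larger])
  then show ?thesis
    using cdfL_psi_cong[OF level_profile_profiles[OF a larger] Q a] larger
    by (simp add: coalition_level_def)
qed

lemma coalition_level_bounds:
  assumes "a \<in> L" "0 \<le> c" "c \<le> 1"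
  shows "0 \<le> coalition_level L psi c S a \<and> coalition_level L psi c S a \<le> 1"
proof (cases "\<exists>b\<in>L. a < b")
  case True
  then show ?thesis
    using cdfL_le_1[OF psi_probs[OF level_profile_profiles[OF assms(1) True]]]
    by (simp add: coalition_level_def cdfL_nonneg)
qed (use assms in \<open>simp add: coalition_level_def\<close>)

lemma coalition_level_mono_coalition:
  assumes a: "a \<in> L" and "c \<le> 1" and SS: "S \<subseteq> S'"
  shows "coalition_level L psi c S a \<le> coalition_level L psi c S' a"
proof (cases "\<exists>b\<in>L. a < b")
  case True
  have "\<forall>j. cdfL L (level_profile L S a j) a \<le> cdfL L (level_profile L S' a j) a"
    using SS by (auto simp: cdfL_level_profile[OF a True])
  then show ?thesis
    using cdfL_psi_mono[OF level_profile_profiles[OF a True] level_profile_profiles[OF a True] a]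
      True by (auto simp: coalition_level_def)
next
  case False
  then show ?thesis using assms by (auto simp: coalition_level_def)
qed

lemma maxmin_coalition_level_indicator:
  assumes "a \<in> L" "0 \<le> c" "c \<le> 1"
  shows "maxmin (\<lambda>S. coalition_level L psi c S a) (\<lambda>j. if j \<in> S then 1 else 0)
    = coalition_level L psi c S a"
  by (rule maxmin_indicator) (use assms coalition_level_mono_coalition coalition_level_bounds in auto)

lemma cdfL_psi_median:
  assumes P: "P \<in> profiles L" and a: "a \<in> L" and b: "b \<in> L" "a < b"
  shows "cdfL L (psi P) a = max (cdfL L (psi (P(i := point_mass L b))) a)
    (min (cdfL L (P i) a) (cdfL L (psi (P(i := point_mass L a))) a))"
proof -
  have Pi: "P i \<in> probs L" using P by (simp add: profiles_def)
  have "cdfL L (psi (P(i := P i))) a = max (cdfL L (psi (P(i := point_mass L b))) a)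
    (min (cdfL L (P i) a) (cdfL L (psi (P(i := point_mass L a))) a))"
    by (rule uncompromising_median[OF uncompromising_psi[OF P a] point_mass_probs[OF b(1)] _
          point_mass_probs[OF a] _ _ Pi])
      (use a b in \<open>auto simp: cdfL_point_mass cdfL_nonneg cdfL_le_1\<close>)
  then show ?thesis by simp
qed

text \<open>
  Induction on the experts not reporting a point mass at \<open>a\<close> or \<open>b\<close>: both sides obey the same
  median recursion in each such report, by \<open>cdfL_psi_median\<close> and \<open>maxmin_median\<close>.\<close>
lemma cdfL_psi_eq_maxmin_point_masses:
  assumes "finite D" and a: "a \<in> L" and b: "b \<in> L" "a < b" and c: "0 \<le> c" "c \<le> 1"
    and P: "P \<in> profiles L" and D: "{j. P j \<noteq> point_mass L a \<and> P j \<noteq> point_mass L b} \<subseteq> D"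
  shows "cdfL L (psi P) a = maxmin (\<lambda>S. coalition_level L psi c S a) (\<lambda>j. cdfL L (P j) a)"
  using assms(1) P D
proof (induction D arbitrary: P rule: finite_induct)
  case empty
  define S where "S = {j. P j = point_mass L a}"
  have lev: "\<forall>j. cdfL L (P j) a = (if j \<in> S then 1 else 0)"
    using empty.prems(2) a b by (auto simp: S_def cdfL_point_mass)
  have "coalition_level L psi c S a = cdfL L (psi P) a"
    by (rule coalition_level_eq_cdfL_psi[OF a _ empty.prems(1) lev]) (use b in blast)
  moreover have "(\<lambda>j. cdfL L (P j) a) = (\<lambda>j. if j \<in> S then 1 else 0)" using lev by auto
  ultimately show ?case using maxmin_coalition_level_indicator[OF a c] by simp
next
  case (insert i D)
  let ?g = "\<lambda>S. coalition_level L psi c S a"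
  let ?t = "\<lambda>j. cdfL L (P j) a"
  have IH: "cdfL L (psi (P(i := point_mass L x))) a = maxmin ?g (?t(i := cdfL L (point_mass L x) a))"
    if "x \<in> {a, b}" for x
  proof -
    have x: "x \<in> L" using that a b by auto
    have "{j. (P(i := point_mass L x)) j \<noteq> point_mass L a \<and> (P(i := point_mass L x)) j \<noteq> point_mass L b}
        \<subseteq> D"
      using insert.prems(2) that by auto
    from insert.IH[OF profiles_upd[OF insert.prems(1) point_mass_probs[OF x]] this]
    have "cdfL L (psi (P(i := point_mass L x))) a
        = maxmin ?g (\<lambda>j. cdfL L ((P(i := point_mass L x)) j) a)" .
    also have "(\<lambda>j. cdfL L ((P(i := point_mass L x)) j) a) = ?t(i := cdfL L (point_mass L x) a)"
      by auto
    finally show ?thesis .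
  qed
  have Pi: "P i \<in> probs L" using insert.prems(1) by (simp add: profiles_def)
  have "cdfL L (psi P) a = max (maxmin ?g (?t(i := 0))) (min (?t i) (maxmin ?g (?t(i := 1))))"
    using cdfL_psi_median[OF insert.prems(1) a b, of i] IH[of a] IH[of b] a b
    by (simp add: cdfL_point_mass)
  also have "\<dots> = maxmin ?g ?t"
    by (rule maxmin_median[symmetric]) (simp_all add: cdfL_nonneg cdfL_le_1[OF Pi])
  finally show ?case .
qed

lemma cdfL_psi_eq_maxmin:
  assumes P: "P \<in> profiles L" and a: "a \<in> L" and c: "0 \<le> c" "c \<le> 1"
  shows "cdfL L (psi P) a = maxmin (\<lambda>S. coalition_level L psi c S a) (\<lambda>j. cdfL L (P j) a)"
proof (cases "\<exists>b\<in>L. a < b")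
  case False
  then have all_below: "\<forall>b\<in>L. b \<le> a" by (auto simp: not_less)
  have "(\<lambda>j. cdfL L (P j) a) = (\<lambda>_. 1)"
    using cdfL_eq_1[OF _ all_below] P by (auto simp: profiles_def)
  moreover have "maxmin (\<lambda>S. coalition_level L psi c S a) (\<lambda>_. 1) = 1"
    by (rule maxmin_const) (use False c in \<open>auto simp: coalition_level_def\<close>)
  ultimately show ?thesis using cdfL_eq_1[OF psi_probs[OF P] all_below] by simp
next
  case True
  then obtain b where "b \<in> L" "a < b" by blast
  from cdfL_psi_eq_maxmin_point_masses[OF finite a this c P subset_UNIV] show ?thesis .
qed

lemma represents_coalition_level: "0 \<le> c \<Longrightarrow> c \<le> 1 \<Longrightarrow> represents L psi (coalition_level L psi c)"
  by (simp add: represents_def cdfL_psi_eq_maxmin maxmin_def min_coal_eq_min_over)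

lemma mono_on_coalition_level:
  assumes c: "0 \<le> c" "c \<le> 1"
    and empty_le: "\<forall>a\<in>L. (\<exists>b\<in>L. a < b) \<longrightarrow> coalition_level L psi c {} a \<le> c"
  shows "mono_on L (coalition_level L psi c S)"
proof (rule mono_onI)
  fix a a' assume a: "a \<in> L" and a': "a' \<in> L" and le: "a \<le> a'"
  show "coalition_level L psi c S a \<le> coalition_level L psi c S a'"
  proof (cases "\<exists>b\<in>L. a' < b")
    case True
    define b where "b = larger L a'"
    have b: "b \<in> L" "a' < b" using larger_mem_greater[OF True] by (simp_all add: b_def)
    then have a_larger: "\<exists>b\<in>L. a < b" using le by force
    define Q where "Q = (\<lambda>j. if j \<in> S then point_mass L a else point_mass L b)"
    have Q: "Q \<in> profiles L" using a b by (simp add: Q_def profiles_def point_mass_probs)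
    have "coalition_level L psi c S a = cdfL L (psi Q) a"
      by (rule coalition_level_eq_cdfL_psi[OF a a_larger Q])
        (use a b le in \<open>auto simp: Q_def cdfL_point_mass\<close>)
    moreover have "coalition_level L psi c S a' = cdfL L (psi Q) a'"
      by (rule coalition_level_eq_cdfL_psi[OF a' True Q])
        (use a b le in \<open>auto simp: Q_def cdfL_point_mass\<close>)
    ultimately show ?thesis using cdfL_mono[OF psi_probs[OF Q] le] by simp
  next
    case a'_max: False
    show ?thesis
    proof (cases "\<exists>b\<in>L. a < b")
      case True
      then show ?thesis
        using a'_max coalition_level_bounds[OF a c, of S] empty_le a
        by (auto simp: coalition_level_def)
    next
      case False
      then have "a' \<le> a" using a' by (auto simp: not_less)
      then show ?thesis using le by simp
    qed
  qed
qed

lemma coalition_level_right_cont: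
  assumes a: "a \<in> L"
  shows "(coalition_level L psi c S \<longlongrightarrow> coalition_level L psi c S a) (at a within (L \<inter> {a<..}))"
proof (cases "\<exists>b\<in>L. a < b")
  case False
  then have "L \<inter> {a<..} = {}" by auto
  then show ?thesis by simp
next
  case True
  define b where "b = larger L a"
  have b: "b \<in> L" "a < b" using larger_mem_greater[OF True] by (simp_all add: b_def)
  define Q where "Q = level_profile L S a"
  have Q: "Q \<in> profiles L" using level_profile_profiles[OF a True] by (simp add: Q_def)
  have ev: "eventually (\<lambda>x. cdfL L (psi Q) x = coalition_level L psi c S x) (at a within (L \<inter> {a<..}))"
    unfolding eventually_at
  proof (intro exI[of _ "b - a"] conjI ballI impI)
    show "0 < b - a" using b by simp
    fix x assume x: "x \<in> L \<inter> {a<..}" and "x \<noteq> a \<and> dist x a < b - a"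
    then have "x < b" by (auto simp: dist_real_def)
    have "Q = (\<lambda>j. if j \<in> S then point_mass L a else point_mass L b)"
      unfolding Q_def level_profile_def b_def ..
    then have lev: "\<forall>j. cdfL L (Q j) x = (if j \<in> S then 1 else 0)"
      using x \<open>x < b\<close> a b by (simp add: cdfL_point_mass)
    have "x \<in> L" "\<exists>b\<in>L. x < b" using x b \<open>x < b\<close> by auto
    from coalition_level_eq_cdfL_psi[OF this Q lev]
    show "cdfL L (psi Q) x = coalition_level L psi c S x" by simp
  qed
  have "(cdfL L (psi Q) \<longlongrightarrow> cdfL L (psi Q) a) (at a within (L \<inter> {a<..}))"
    using tendsto_within_subset[OF cdfL_right_cont[OF psi_probs[OF Q]] Int_lower2] .
  moreover have "coalition_level L psi c S a = cdfL L (psi Q) a"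
    using True by (simp add: coalition_level_def Q_def)
  ultimately show ?thesis using tendsto_cong[OF ev] by simp
qed

lemma coalition_level_UNIV_tendsto_to_sup:
  assumes "L \<noteq> {}" and not_sup: "\<not> sup_in L"
  shows "(coalition_level L psi c UNIV \<longlongrightarrow> 1) (to_sup L)"
proof -
  obtain a0 where a0: "a0 \<in> L" using assms(1) by blast
  define Q where "Q = (\<lambda>_::'n. point_mass L a0)"
  have Q: "Q \<in> profiles L" using a0 by (simp add: Q_def profiles_def point_mass_probs)
  have no_max: "\<exists>b\<in>L. x < b" if "x \<in> L" for x
  proof (rule ccontr)
    assume "\<not> (\<exists>b\<in>L. x < b)"
    then have "\<forall>b\<in>L. b \<le> x" by (auto simp: not_less)
    then show False using not_sup that cSup_eq_maximum[of x L] by (auto simp: sup_in_def bdd_above_def)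
  qed
  have "eventually (\<lambda>x. cdfL L (psi Q) x = coalition_level L psi c UNIV x) (to_sup L)"
    using eventually_to_sup_ge[OF not_sup a0]
  proof eventually_elim
    case (elim x)
    then have "\<forall>j. cdfL L (Q j) x = (if j \<in> UNIV then 1 else 0)"
      using a0 by (simp add: Q_def cdfL_point_mass)
    from coalition_level_eq_cdfL_psi[OF _ no_max Q this] show ?case using elim by simp
  qed
  then show ?thesis using tendsto_cong cdfL_tendsto_to_sup[OF psi_probs[OF Q] not_sup] by blast
qed

lemma coalition_level_empty_tendsto_to_inf:
  assumes "L \<noteq> {}" and not_inf: "\<not> inf_in L"
  shows "(coalition_level L psi c {} \<longlongrightarrow> 0) (to_inf L)"
proof -
  obtain b0 where b0: "b0 \<in> L" using assms(1) by blast
  define Q where "Q = (\<lambda>_::'n. point_mass L b0)"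
  have Q: "Q \<in> profiles L" using b0 by (simp add: Q_def profiles_def point_mass_probs)
  have "eventually (\<lambda>x. cdfL L (psi Q) x = coalition_level L psi c {} x) (to_inf L)"
    using eventually_to_inf_less[OF not_inf b0]
  proof eventually_elim
    case (elim x)
    then have "\<forall>j. cdfL L (Q j) x = (if j \<in> {} then 1 else 0)"
      using b0 by (simp add: Q_def cdfL_point_mass)
    moreover have "\<exists>b\<in>L. x < b" using elim b0 by blast
    ultimately show ?case using coalition_level_eq_cdfL_psi[OF _ _ Q] elim by simp
  qed
  then show ?thesis using tendsto_cong cdfL_tendsto_to_inf[OF psi_probs[OF Q] not_inf] by blast
qed

lemma admissible_coalition_level:
  assumes "L \<noteq> {}" and c: "0 \<le> c" "c \<le> 1"
    and empty_le: "\<forall>a\<in>L. (\<exists>b\<in>L. a < b) \<longrightarrow> coalition_level L psi c {} a \<le> c"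
  shows "admissible_family L (coalition_level L psi c)"
proof -
  have "coalition_level L psi c UNIV (Sup L) = 1" if "sup_in L"
  proof -
    have "\<not> (\<exists>b\<in>L. Sup L < b)" using that cSup_upper[of _ L] by (auto simp: sup_in_def not_less)
    then show ?thesis by (simp add: coalition_level_def)
  qed
  then show ?thesis
    unfolding admissible_family_def
    using mono_on_coalition_level[OF c empty_le] coalition_level_right_cont coalition_level_bounds[OF _ c]
      coalition_level_mono_coalition[OF _ c(2)] coalition_level_UNIV_tendsto_to_sup[OF assms(1)]
      coalition_level_empty_tendsto_to_inf[OF assms(1)]
    by simp
qed

lemma coalition_level_unanimous:
  assumes U: "unanimous L psi" and a: "a \<in> L"
  shows "coalition_level L psi 0 {} a = 0 \<and> coalition_level L psi 0 UNIV a = 1"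
proof (cases "\<exists>b\<in>L. a < b")
  case True
  define b where "b = larger L a"
  have b: "b \<in> L" "a < b" using larger_mem_greater[OF True] by (simp_all add: b_def)
  have "level_profile L {} a = (\<lambda>_::'n. point_mass L b)" "level_profile L UNIV a = (\<lambda>_::'n. point_mass L a)"
    by (simp_all add: level_profile_def b_def)
  then show ?thesis
    using True U a b point_mass_probs[OF a] point_mass_probs[OF b(1)]
    by (simp add: coalition_level_def unanimous_def cdfL_point_mass)
qed (simp add: coalition_level_def)

lemma exists_representation:
  assumes "L \<noteq> {}"
  shows "\<exists>f. admissible_family L f \<and> represents L psi f"
  using admissible_coalition_level[OF assms] represents_coalition_level coalition_level_bounds
  by (meson order_refl zero_le_one)

lemma exists_unanimous_representation:
  assumes "L \<noteq> {}" "unanimous L psi"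
  shows "\<exists>f. admissible_family L f \<and> represents L psi f \<and> (\<forall>a\<in>L. f {} a = 0 \<and> f UNIV a = 1)"
  using admissible_coalition_level[OF assms(1) order_refl zero_le_one]
    represents_coalition_level[OF order_refl zero_le_one] coalition_level_unanimous[OF assms(2)]
  by auto

end

theorem mainTheorem1:
  fixes L :: "real set"
    and psi :: "('n::finite \<Rightarrow> real measure) \<Rightarrow> real measure"
  assumes "L \<in> sets borel"
    and "L \<noteq> {}"
    and "is_PAF L psi"
  shows "(level_SP L psi \<longleftrightarrow> (\<exists>f. admissible_family L f \<and> represents L psi f))
       \<and> (level_SP L psi \<longrightarrow>
            (unanimous L psi \<longleftrightarrow>
              (\<exists>f. admissible_family L f \<and> represents L psi f
                   \<and> (\<forall>a \<in> L. f {} a = 0 \<and> f UNIV a = 1))))"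
proof (intro conjI iffI impI)
  assume "level_SP L psi"
  then interpret level_SP_PAF L psi using assms(3) by unfold_locales
  show "\<exists>f. admissible_family L f \<and> represents L psi f"
    by (rule exists_representation[OF assms(2)])
next
  assume "\<exists>f. admissible_family L f \<and> represents L psi f"
  then show "level_SP L psi" using level_SP_if_represents by blast
next
  assume "level_SP L psi" and "unanimous L psi"
  then interpret level_SP_PAF L psi using assms(3) by unfold_locales
  show "\<exists>f. admissible_family L f \<and> represents L psi f \<and> (\<forall>a\<in>L. f {} a = 0 \<and> f UNIV a = 1)"
    by (rule exists_unanimous_representation[OF assms(2) \<open>unanimous L psi\<close>])
next
  assume "\<exists>f. admissible_family L f \<and> represents L psi f \<and> (\<forall>a\<in>L. f {} a = 0 \<and> f UNIV a = 1)"
  then show "unanimous L psi" using unanimous_if_represents[OF assms(1,3)] by blast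
qed
end
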